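(* Let $\Theta$ be a parameter space, let $L(\boldsymbol{\theta}\mid D)$ and $L(\boldsymbol{\theta}\mid D_0)$ be the (positive) likelihood functions of the current data $D$ and the historical data $D_0$, let $\pi_0$ be an initial prior density on $\Theta$, let $\xi\in[0,1]$ and let $\alpha\in\mathbb{R}\setminus\{-1,1\}$. Put $$p_0(\boldsymbol{\theta})=L(\boldsymbol{\theta}\mid D)\pi_0(\boldsymbol{\theta}),\qquad p_1(\boldsymbol{\theta})=L(\boldsymbol{\theta}\mid D)L(\boldsymbol{\theta}\mid D_0)\pi_0(\boldsymbol{\theta}),$$ and assume $0<\int_\Theta\{(1-\xi)p_0(\boldsymbol{\theta})^{\frac{1+\alpha}{2}}+\xi p_1(\boldsymbol{\theta})^{\frac{1+\alpha}{2}}\}^{\frac{2}{1+\alpha}}d\boldsymbol{\theta}<\infty$. Then the generalized power posterior $$g^*(\boldsymbol{\theta})=\frac{\left\{(1-\xi)p_0(\boldsymbol{\theta})^{\frac{1+\alpha}{2}}+\xi p_1(\boldsymbol{\theta})^{\frac{1+\alpha}{2}}\right\}^{\frac{2}{1+\alpha}}}{\int_\Theta\left\{(1-\xi)p_0(\boldsymbol{\theta}')^{\frac{1+\alpha}{2}}+\xi p_1(\boldsymbol{\theta}')^{\frac{1+\alpha}{2}}\right\}^{\frac{2}{1+\alpha}}d\boldsymbol{\theta}'}$$ is the minimizer of $(1-\xi)D_\alpha[g\,\|\,p_0]+\xi D_\alpha[g\,\|\,p_1]$ over all probability densities $g\ge 0$ on $\Theta$ with $\int_\Theta g(\boldsy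mbol{\theta})d\boldsymbol{\theta}=1$.
   Context: Amari's $\alpha$-divergence between nonnegative functions $p,q$ on $\Theta$ is $D_\alpha[p\,\|\,q]=\frac{4}{1-\alpha^2}\left(1-\int_\Theta p(\boldsymbol{\theta})^{\frac{1-\alpha}{2}}q(\boldsymbol{\theta})^{\frac{1+\alpha}{2}}d\boldsymbol{\theta}\right)$. Here $p_0,p_1$ are the (unnormalized) pseudo-posteriors corresponding to ignoring ($\xi=0$) and fully using ($\xi=1$) the historical data in the power prior $\pi(\boldsymbol{\theta}\mid D_0,\xi)\propto L(\boldsymbol{\theta}\mid D_0)^\xi\pi_0(\boldsymbol{\theta})$. *)

theory Defs
  imports "HOL-Analysis.Analysis"
begin

definition epow :: "ennreal \<Rightarrow> real \<Rightarrow> ennreal" where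
  "epow x e =
     (if x = 0 then (if e < 0 then top else if e = 0 then 1 else 0)
      else if x = top then (if e < 0 then 0 else if e = 0 then 1 else top)
      else ennreal (enn2real x powr e))"

definition alpha_div :: "'a measure \<Rightarrow> real \<Rightarrow> ('a \<Rightarrow> real) \<Rightarrow> ('a \<Rightarrow> real) \<Rightarrow> ereal" where
  "alpha_div M \<alpha> p q =
     ereal (4 / (1 - \<alpha>\<^sup>2)) *
     (1 - enn2ereal (\<integral>\<^sup>+ \<theta>. epow (ennreal (p \<theta>)) ((1 - \<alpha>) / 2)
                                  * epow (ennreal (q \<theta>)) ((1 + \<alpha>) / 2) \<partial>M))"

definition is_density :: "'a measure \<Rightarrow> ('a \<Rightarrow> real) \<Rightarrow> bool" where
  "is_density M g \<longleftrightarrow> g \<in> borel_measurable M \<and> (\<forall>\<theta>\<in>space M. 0 \<le> g \<theta>)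
      \<and> (\<integral>\<^sup>+ \<theta>. ennreal (g \<theta>) \<partial>M) = 1"

definition gpp_num :: "real \<Rightarrow> real \<Rightarrow> ('a \<Rightarrow> real) \<Rightarrow> ('a \<Rightarrow> real) \<Rightarrow> 'a \<Rightarrow> ennreal" where
  "gpp_num \<xi> \<alpha> p0 p1 \<theta> =
     epow (ennreal (1 - \<xi>) * epow (ennreal (p0 \<theta>)) ((1 + \<alpha>) / 2)
           + ennreal \<xi> * epow (ennreal (p1 \<theta>)) ((1 + \<alpha>) / 2)) (2 / (1 + \<alpha>))"

definition gen_power_posterior ::
    "'a measure \<Rightarrow> real \<Rightarrow> real \<Rightarrow> ('a \<Rightarrow> real) \<Rightarrow> ('a \<Rightarrow> real) \<Rightarrow> 'a \<Rightarrow> real" where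
  "gen_power_posterior M \<xi> \<alpha> p0 p1 \<theta> =
     enn2real (gpp_num \<xi> \<alpha> p0 p1 \<theta>) / enn2real (\<integral>\<^sup>+ \<theta>'. gpp_num \<xi> \<alpha> p0 p1 \<theta>' \<partial>M)"

end

theory Submission
  imports Defs
begin

(* Put b = (1 + alpha)/2 and c = 4/(1 - alpha^2) = 1/(b (1 - b)), so that
   D_alpha[g || q] = c (1 - A(g, q)) with the affinity A(g, q) = int g^(1-b) q^b.
   If Z is the normalizer of the power posterior G, then (1 - xi) p0^b + xi p1^b = (Z G)^b,
   so by linearity of the integral the objective equals c (1 - Z^b A(g, G)).
   Young's inequality gives A(g, G) <= 1 = A(G, G) for densities g when 0 < b < 1, where c > 0,
   and A(g, G) >= 1 when b > 1 or b < 0, where c < 0; in either case G is a minimizer. *)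

lemma measurable_epow [measurable (raw)]:
  assumes [measurable]: "f \<in> borel_measurable M"
  shows "(\<lambda>x. epow (f x) e) \<in> borel_measurable M"
  unfolding epow_def by measurable

lemma epow_epow_inverse:
  assumes "e \<noteq> 0"
  shows "epow (epow x e) (1 / e) = x"
proof (cases x)
  case (real r)
  then show ?thesis using assms
    by (cases "r = 0") (auto simp: epow_def powr_powr ennreal_eq_0_iff)
qed (use assms in \<open>auto simp: epow_def\<close>)

lemma epow_complement_mult_self:
  "0 \<le> x \<Longrightarrow> epow (ennreal x) (1 - b) * epow (ennreal x) b = ennreal x"
  by (cases "x = 0") (auto simp: epow_def ennreal_mult'[symmetric] powr_add[symmetric])

lemma epow_ennreal_mult:
  assumes "0 < c" "0 \<le> x"
  shows "epow (ennreal (c * x)) e = ennreal (c powr e) * epow (ennreal x) e"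
  using assms
  by (cases "x = 0") (auto simp: epow_def ennreal_top_mult ennreal_mult'[symmetric] powr_mult)

lemma epow_less_top: "x < top \<Longrightarrow> 0 \<le> e \<Longrightarrow> epow x e < top"
  by (auto simp: epow_def)

lemma epow_neg_less_top: "0 < x \<Longrightarrow> e < 0 \<Longrightarrow> epow x e < top"
  by (auto simp: epow_def)

lemma epow_neg_pos: "x < top \<Longrightarrow> e < 0 \<Longrightarrow> 0 < epow x e"
  by (cases x) (auto simp: epow_def ennreal_eq_0_iff)

lemma reverse_Youngs_inequality:
  fixes g h b :: real
  assumes "0 < g" "0 < h" "1 < b"
  shows "b * h \<le> g powr (1 - b) * h powr b + (b - 1) * g"
proof -
  define a where "a = g powr (1 - b) * h powr b"
  have "a powr (1 / b) = g powr ((1 - b) / b) * h"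
    using assms unfolding a_def by (simp add: powr_mult powr_powr)
  then have "a powr (1 / b) * g powr (1 - 1 / b) = h * g powr ((1 - b) / b + (1 - 1 / b))"
    using assms by (simp add: powr_add)
  also have "(1 - b) / b + (1 - 1 / b) = 0"
    using assms by (simp add: field_simps)
  finally have "h = a powr (1 / b) * g powr (1 - 1 / b)"
    using assms by simp
  also have "\<dots> \<le> (1 / b) * a + (1 - 1 / b) * g"
    using assms by (intro Youngs_inequality_0) (auto simp: a_def)
  finally have "b * h \<le> b * ((1 / b) * a + (1 - 1 / b) * g)"
    using assms by simp
  also have "\<dots> = a + (b - 1) * g"
    using assms by (simp add: field_simps)
  finally show ?thesis
    by (simp add: a_def)
qed

lemma Youngs_inequality_epow:
  fixes g h b :: real
  assumes "0 \<le> g" "0 \<le> h" "0 < b" "b < 1"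
  shows "epow (ennreal g) (1 - b) * epow (ennreal h) b \<le> ennreal ((1 - b) * g) + ennreal (b * h)"
proof (cases "g = 0 \<or> h = 0")
  case False
  with assms have "g powr (1 - b) * h powr b \<le> (1 - b) * g + b * h"
    by (intro Youngs_inequality_0) auto
  with False assms show ?thesis
    by (simp add: epow_def ennreal_mult'[symmetric] ennreal_plus[symmetric] ennreal_leI
        del: ennreal_plus)
qed (use assms in \<open>auto simp: epow_def\<close>)

lemma reverse_Youngs_inequality_epow:
  fixes g h b :: real
  assumes "0 \<le> g" "0 \<le> h" "1 < b"
  shows "ennreal (b * h) \<le> epow (ennreal g) (1 - b) * epow (ennreal h) b + ennreal ((b - 1) * g)"
proof (cases "g = 0 \<or> h = 0")
  case False
  with assms have "ennreal (b * h) \<le> ennreal (g powr (1 - b) * h powr b + (b - 1) * g)"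
    by (intro ennreal_leI reverse_Youngs_inequality) auto
  also have "\<dots> = ennreal (g powr (1 - b) * h powr b) + ennreal ((b - 1) * g)"
    using assms by (intro ennreal_plus) auto
  finally show ?thesis
    using False assms by (simp add: epow_def ennreal_mult'[symmetric])
qed (use assms in \<open>auto simp: epow_def ennreal_top_mult\<close>)

lemma is_density_measurable: "is_density M g \<Longrightarrow> g \<in> borel_measurable M"
  by (simp add: is_density_def)

lemma nn_integral_density_cmult:
  assumes "is_density M g" "0 \<le> u"
  shows "(\<integral>\<^sup>+ \<theta>. ennreal (u * g \<theta>) \<partial>M) = ennreal u"
proof -
  have "(\<integral>\<^sup>+ \<theta>. ennreal (u * g \<theta>) \<partial>M) = (\<integral>\<^sup>+ \<theta>. ennreal u * ennreal (g \<theta>) \<partial>M)"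
    using assms by (intro nn_integral_cong) (simp add: is_density_def ennreal_mult)
  then show ?thesis
    using assms by (simp add: is_density_def nn_integral_cmult)
qed

definition power_affinity :: "'a measure \<Rightarrow> real \<Rightarrow> ('a \<Rightarrow> real) \<Rightarrow> ('a \<Rightarrow> real) \<Rightarrow> ennreal"
  where "power_affinity M b g h =
    (\<integral>\<^sup>+ \<theta>. epow (ennreal (g \<theta>)) (1 - b) * epow (ennreal (h \<theta>)) b \<partial>M)"

lemma alpha_div_eq_power_affinity:
  "alpha_div M \<alpha> g q = ereal (4 / (1 - \<alpha>\<^sup>2)) * (1 - enn2ereal (power_affinity M ((1 + \<alpha>) / 2) g q))"
proof -
  have "(1 - \<alpha>) / 2 = 1 - (1 + \<alpha>) / 2"
    by (simp add: field_simps)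
  then show ?thesis
    unfolding alpha_div_def power_affinity_def by (simp only:)
qed

lemma power_affinity_commute: "power_affinity M b g h = power_affinity M (1 - b) h g"
  by (simp add: power_affinity_def mult.commute)

lemma power_affinity_self: "is_density M g \<Longrightarrow> power_affinity M b g g = 1"
  by (simp add: is_density_def power_affinity_def epow_complement_mult_self cong: nn_integral_cong)

lemma power_affinity_le_1:
  assumes g: "is_density M g" and h: "is_density M h" and b: "0 < b" "b < 1"
  shows "power_affinity M b g h \<le> 1"
proof -
  note [measurable] = is_density_measurable[OF g] is_density_measurable[OF h]
  have "power_affinity M b g h \<le> (\<integral>\<^sup>+ \<theta>. ennreal ((1 - b) * g \<theta>) + ennreal (b * h \<theta>) \<partial>M)"
    unfolding power_affinity_def
  proof (intro nn_integral_mono)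
    fix \<theta> assume "\<theta> \<in> space M"
    with g h b show "epow (ennreal (g \<theta>)) (1 - b) * epow (ennreal (h \<theta>)) b
        \<le> ennreal ((1 - b) * g \<theta>) + ennreal (b * h \<theta>)"
      by (intro Youngs_inequality_epow) (auto simp: is_density_def)
  qed
  also have "\<dots> = (\<integral>\<^sup>+ \<theta>. ennreal ((1 - b) * g \<theta>) \<partial>M) + (\<integral>\<^sup>+ \<theta>. ennreal (b * h \<theta>) \<partial>M)"
    by (intro nn_integral_add) measurable
  also have "\<dots> = ennreal (1 - b) + ennreal b"
    using g h b by (simp add: nn_integral_density_cmult)
  finally show ?thesis
    using b by (simp add: ennreal_plus[symmetric] del: ennreal_plus)
qed

lemma power_affinity_ge_1:
  assumes g: "is_density M g" and h: "is_density M h" and b: "1 < b"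
  shows "1 \<le> power_affinity M b g h"
proof -
  note [measurable] = is_density_measurable[OF g] is_density_measurable[OF h]
  have "ennreal (b - 1) + 1 = ennreal b"
    using b ennreal_plus[of "b - 1" 1] by simp
  also have "\<dots> = (\<integral>\<^sup>+ \<theta>. ennreal (b * h \<theta>) \<partial>M)"
    using h b by (simp add: nn_integral_density_cmult)
  also have "\<dots> \<le> (\<integral>\<^sup>+ \<theta>. epow (ennreal (g \<theta>)) (1 - b) * epow (ennreal (h \<theta>)) b
                      + ennreal ((b - 1) * g \<theta>) \<partial>M)"
    using g h b by (intro nn_integral_mono reverse_Youngs_inequality_epow) (auto simp: is_density_def)
  also have "\<dots> = power_affinity M b g h + (\<integral>\<^sup>+ \<theta>. ennreal ((b - 1) * g \<theta>) \<partial>M)"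
    unfolding power_affinity_def by (intro nn_integral_add) measurable
  also have "\<dots> = power_affinity M b g h + ennreal (b - 1)"
    using g b by (simp add: nn_integral_density_cmult)
  finally show ?thesis
    by (simp add: add.commute ennreal_add_left_cancel_le)
qed

lemma power_affinity_ge_1_neg:
  "is_density M g \<Longrightarrow> is_density M h \<Longrightarrow> b < 0 \<Longrightarrow> 1 \<le> power_affinity M b g h"
  using power_affinity_ge_1[of M h g "1 - b"] by (simp add: power_affinity_commute[of M b])

lemma ereal_affine_mix:
  fixes a b c :: real and X0 X1 :: ennreal
  assumes "0 \<le> a" "0 \<le> b" "a + b = 1"
  shows "ereal a * (ereal c * (1 - enn2ereal X0)) + ereal b * (ereal c * (1 - enn2ereal X1))
       = ereal c * (1 - enn2ereal (ennreal a * X0 + ennreal b * X1))"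
proof -
  consider "a = 0" | "b = 0" | "0 < a" "0 < b" "X0 = top \<or> X1 = top"
    | "X0 \<noteq> top" "X1 \<noteq> top"
    using assms by linarith
  then show ?thesis
  proof cases
    case 3
    then show ?thesis
      by (cases c rule: linorder_cases[of _ 0]; cases X0; cases X1)
        (auto simp: ennreal_mult_top one_ereal_def)
  next
    case 4
    then obtain x0 x1 where x: "X0 = ennreal x0" "X1 = ennreal x1" "0 \<le> x0" "0 \<le> x1"
      by (metis ennreal_cases)
    have "a * (c * (1 - x0)) + b * (c * (1 - x1)) = c * (1 - (a * x0 + b * x1))"
      using assms(3) by algebra
    then show ?thesis
      using assms x
      by (simp add: ennreal_mult'[symmetric] ennreal_plus[symmetric] one_ereal_def del: ennreal_plus)
  qed (use assms in \<open>simp_all add: zero_ereal_def[symmetric]\<close>)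
qed

lemma ereal_mult_one_minus_antimono:
  "0 \<le> c \<Longrightarrow> X \<le> Y \<Longrightarrow> ereal c * (1 - enn2ereal Y) \<le> ereal c * (1 - enn2ereal X)"
  by (intro ereal_mult_left_mono ereal_minus_mono) (auto simp: less_eq_ennreal.rep_eq)

lemma ereal_mult_one_minus_mono:
  "c \<le> 0 \<Longrightarrow> X \<le> Y \<Longrightarrow> ereal c * (1 - enn2ereal X) \<le> ereal c * (1 - enn2ereal Y)"
  using ereal_minus_mono ereal_mult_le_mult_iff less_eq_ennreal.rep_eq by force

lemma gpp_num_less_top:
  assumes "0 \<le> \<xi>" "\<xi> \<le> 1" "\<alpha> \<noteq> -1"
  shows "gpp_num \<xi> \<alpha> p0 p1 \<theta> < top"
proof -
  define b where "b = (1 + \<alpha>) / 2"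
  define S where "S = ennreal (1 - \<xi>) * epow (ennreal (p0 \<theta>)) b + ennreal \<xi> * epow (ennreal (p1 \<theta>)) b"
  have "2 / (1 + \<alpha>) = 1 / b"
    by (simp add: b_def)
  then have gpp: "gpp_num \<xi> \<alpha> p0 p1 \<theta> = epow S (1 / b)"
    by (simp add: gpp_num_def S_def b_def)
  consider "0 < b" | "b < 0"
    using assms by (fastforce simp: b_def)
  then show ?thesis
  proof cases
    case 1
    then have "S < top"
      by (simp add: S_def epow_less_top ennreal_mult_less_top)
    with 1 show ?thesis
      by (simp add: gpp epow_less_top)
  next
    case 2
    have "0 < S"
    proof (cases "\<xi> = 0")
      case False
      with assms 2 have "0 < ennreal \<xi> * epow (ennreal (p1 \<theta>)) b"
        by (simp add: epow_neg_pos ennreal_zero_less_mult_iff)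
      then show ?thesis
        unfolding S_def using add_increasing[OF zero_le order_refl] by (rule order_less_le_trans)
    qed (use 2 in \<open>simp add: S_def epow_neg_pos\<close>)
    with 2 show ?thesis
      by (simp add: gpp epow_neg_less_top)
  qed
qed

lemma epow_gpp_num:
  assumes "\<alpha> \<noteq> -1"
  shows "epow (gpp_num \<xi> \<alpha> p0 p1 \<theta>) ((1 + \<alpha>) / 2)
       = ennreal (1 - \<xi>) * epow (ennreal (p0 \<theta>)) ((1 + \<alpha>) / 2)
         + ennreal \<xi> * epow (ennreal (p1 \<theta>)) ((1 + \<alpha>) / 2)"
proof -
  have "1 / (2 / (1 + \<alpha>)) = (1 + \<alpha>) / 2" "2 / (1 + \<alpha>) \<noteq> 0"
    using assms by (auto simp: add_eq_0_iff)
  then show ?thesis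
    unfolding gpp_num_def by (metis epow_epow_inverse)
qed

locale gen_power_posterior_setting =
  fixes M :: "'a measure" and \<xi> \<alpha> :: real and p0 p1 :: "'a \<Rightarrow> real"
  assumes p0_measurable [measurable]: "p0 \<in> borel_measurable M"
    and p1_measurable [measurable]: "p1 \<in> borel_measurable M"
    and xi_nonneg: "0 \<le> \<xi>" and xi_le_1: "\<xi> \<le> 1"
    and alpha_ne_1: "\<alpha> \<noteq> 1" and alpha_ne_minus_1: "\<alpha> \<noteq> -1"
    and normalizer_pos: "0 < (\<integral>\<^sup>+ \<theta>. gpp_num \<xi> \<alpha> p0 p1 \<theta> \<partial>M)"
    and normalizer_finite: "(\<integral>\<^sup>+ \<theta>. gpp_num \<xi> \<alpha> p0 p1 \<theta> \<partial>M) < \<infinity>"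
begin

definition normalizer :: real
  where "normalizer = enn2real (\<integral>\<^sup>+ \<theta>. gpp_num \<xi> \<alpha> p0 p1 \<theta> \<partial>M)"

abbreviation gstar :: "'a \<Rightarrow> real"
  where "gstar \<equiv> gen_power_posterior M \<xi> \<alpha> p0 p1"

lemma normalizer_gt_0: "0 < normalizer"
  using normalizer_pos normalizer_finite by (simp add: normalizer_def enn2real_positive_iff)

lemma gstar_nonneg: "0 \<le> gstar \<theta>"
  by (simp add: gen_power_posterior_def)

lemma gpp_num_eq_normalizer_mult_gstar: "gpp_num \<xi> \<alpha> p0 p1 \<theta> = ennreal (normalizer * gstar \<theta>)"
  using normalizer_gt_0 gpp_num_less_top[OF xi_nonneg xi_le_1 alpha_ne_minus_1]
  by (simp add: gen_power_posterior_def normalizer_def[symmetric] ennreal_enn2real_if less_top)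

lemma gpp_num_measurable [measurable]: "gpp_num \<xi> \<alpha> p0 p1 \<in> borel_measurable M"
  unfolding gpp_num_def by measurable

lemma gstar_measurable [measurable]: "gstar \<in> borel_measurable M"
  unfolding gen_power_posterior_def by measurable

lemma is_density_gstar: "is_density M gstar"
proof -
  have "(\<integral>\<^sup>+ \<theta>. ennreal (gstar \<theta>) \<partial>M) = (\<integral>\<^sup>+ \<theta>. gpp_num \<xi> \<alpha> p0 p1 \<theta> * ennreal (1 / normalizer) \<partial>M)"
    using normalizer_gt_0 gstar_nonneg
    by (intro nn_integral_cong) (simp add: gpp_num_eq_normalizer_mult_gstar ennreal_mult'[symmetric])
  also have "\<dots> = ennreal normalizer * ennreal (1 / normalizer)"
    using normalizer_pos normalizer_finite
    by (simp add: nn_integral_multc normalizer_def ennreal_enn2real_if less_top)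
  also have "\<dots> = 1"
    using normalizer_gt_0 by (simp add: ennreal_mult'[symmetric])
  finally show ?thesis
    by (simp add: is_density_def gstar_nonneg)
qed

lemma mix_power_affinity_eq:
  assumes [measurable]: "g \<in> borel_measurable M"
  shows "ennreal (1 - \<xi>) * power_affinity M ((1 + \<alpha>) / 2) g p0 + ennreal \<xi> * power_affinity M ((1 + \<alpha>) / 2) g p1
       = ennreal (normalizer powr ((1 + \<alpha>) / 2)) * power_affinity M ((1 + \<alpha>) / 2) g gstar"
proof -
  define b where "b = (1 + \<alpha>) / 2"
  define G where "G \<theta> = epow (ennreal (g \<theta>)) (1 - b)" for \<theta>
  have [measurable]: "G \<in> borel_measurable M"
    unfolding G_def by measurable
  have "ennreal (1 - \<xi>) * power_affinity M b g p0 + ennreal \<xi> * power_affinity M b g p1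
      = (\<integral>\<^sup>+ \<theta>. G \<theta> * (ennreal (1 - \<xi>) * epow (ennreal (p0 \<theta>)) b + ennreal \<xi> * epow (ennreal (p1 \<theta>)) b) \<partial>M)"
    by (simp add: power_affinity_def G_def nn_integral_add nn_integral_cmult[symmetric]
        distrib_left mult.left_commute)
  also have "\<dots> = (\<integral>\<^sup>+ \<theta>. G \<theta> * epow (ennreal (normalizer * gstar \<theta>)) b \<partial>M)"
    using alpha_ne_minus_1 by (simp add: b_def epow_gpp_num gpp_num_eq_normalizer_mult_gstar[symmetric])
  also have "\<dots> = (\<integral>\<^sup>+ \<theta>. ennreal (normalizer powr b) * (G \<theta> * epow (ennreal (gstar \<theta>)) b) \<partial>M)"
    using normalizer_gt_0 gstar_nonneg by (simp add: epow_ennreal_mult mult.left_commute)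
  also have "\<dots> = ennreal (normalizer powr b) * power_affinity M b g gstar"
    by (simp add: nn_integral_cmult power_affinity_def G_def)
  finally show ?thesis
    by (simp add: b_def)
qed

lemma alpha_div_mix_eq:
  assumes "g \<in> borel_measurable M"
  shows "ereal (1 - \<xi>) * alpha_div M \<alpha> g p0 + ereal \<xi> * alpha_div M \<alpha> g p1
       = ereal (4 / (1 - \<alpha>\<^sup>2)) * (1 - enn2ereal (ennreal (normalizer powr ((1 + \<alpha>) / 2))
                                       * power_affinity M ((1 + \<alpha>) / 2) g gstar))"
  using xi_nonneg xi_le_1
  by (simp add: alpha_div_eq_power_affinity ereal_affine_mix mix_power_affinity_eq[OF assms])

theorem gstar_minimizes_alpha_div_mix:
  assumes g: "is_density M g"
  shows "ereal (1 - \<xi>) * alpha_div M \<alpha> gstar p0 + ereal \<xi> * alpha_div M \<alpha> gstar p1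
       \<le> ereal (1 - \<xi>) * alpha_div M \<alpha> g p0 + ereal \<xi> * alpha_div M \<alpha> g p1"
proof -
  define b where "b = (1 + \<alpha>) / 2"
  define c where "c = 4 / (1 - \<alpha>\<^sup>2)"
  define K where "K = ennreal (normalizer powr b)"
  have "power_affinity M b gstar gstar = 1"
    using is_density_gstar by (rule power_affinity_self)
  then have objective_gstar: "ereal (1 - \<xi>) * alpha_div M \<alpha> gstar p0 + ereal \<xi> * alpha_div M \<alpha> gstar p1
      = ereal c * (1 - enn2ereal K)"
    by (simp add: alpha_div_mix_eq b_def c_def K_def)
  have objective_g: "ereal (1 - \<xi>) * alpha_div M \<alpha> g p0 + ereal \<xi> * alpha_div M \<alpha> g p1
      = ereal c * (1 - enn2ereal (K * power_affinity M b g gstar))"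
    using g by (simp add: alpha_div_mix_eq is_density_measurable b_def c_def K_def)
  consider "-1 < \<alpha>" "\<alpha> < 1" | "1 < \<alpha> \<or> \<alpha> < -1"
    using alpha_ne_1 alpha_ne_minus_1 by linarith
  then show ?thesis
  proof cases
    case 1
    then have "0 \<le> c"
      by (simp add: c_def abs_square_less_1 less_imp_le)
    moreover have "K * power_affinity M b g gstar \<le> K"
      using 1 g is_density_gstar power_affinity_le_1[of M g gstar b]
      by (simp add: b_def mult_left_le)
    ultimately show ?thesis
      unfolding objective_gstar objective_g by (rule ereal_mult_one_minus_antimono)
  next
    case 2
    then have "1 < b \<or> b < 0"
      by (auto simp: b_def)
    then have "1 \<le> power_affinity M b g gstar"
      using g is_density_gstar power_affinity_ge_1 power_affinity_ge_1_neg by blast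
    then have "K \<le> K * power_affinity M b g gstar"
      using mult_left_mono[of 1 _ K] by simp
    moreover from 2 have "c \<le> 0"
      using abs_square_less_1[of \<alpha>] by (auto simp: c_def)
    ultimately show ?thesis
      unfolding objective_gstar objective_g by (intro ereal_mult_one_minus_mono)
  qed
qed

end

theorem mainTheorem1:
  fixes M :: "'a measure" and L L0 \<pi>0 :: "'a \<Rightarrow> real" and \<xi> \<alpha> :: real
  assumes L_meas: "L \<in> borel_measurable M" and L0_meas: "L0 \<in> borel_measurable M"
    and L_pos: "\<forall>\<theta>\<in>space M. 0 < L \<theta>" and L0_pos: "\<forall>\<theta>\<in>space M. 0 < L0 \<theta>"
    and prior: "is_density M \<pi>0"
    and xi: "0 \<le> \<xi>" "\<xi> \<le> 1"
    and alpha: "\<alpha> \<noteq> 1" "\<alpha> \<noteq> -1"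
    and Z_pos: "0 < (\<integral>\<^sup>+ \<theta>. gpp_num \<xi> \<alpha> (\<lambda>\<theta>. L \<theta> * \<pi>0 \<theta>) (\<lambda>\<theta>. L \<theta> * L0 \<theta> * \<pi>0 \<theta>) \<theta> \<partial>M)"
    and Z_fin: "(\<integral>\<^sup>+ \<theta>. gpp_num \<xi> \<alpha> (\<lambda>\<theta>. L \<theta> * \<pi>0 \<theta>) (\<lambda>\<theta>. L \<theta> * L0 \<theta> * \<pi>0 \<theta>) \<theta> \<partial>M) < \<infinity>"
  shows "let p0 = (\<lambda>\<theta>. L \<theta> * \<pi>0 \<theta>);
             p1 = (\<lambda>\<theta>. L \<theta> * L0 \<theta> * \<pi>0 \<theta>);
             gstar = gen_power_posterior M \<xi> \<alpha> p0 p1;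
             obj = (\<lambda>g. ereal (1 - \<xi>) * alpha_div M \<alpha> g p0 + ereal \<xi> * alpha_div M \<alpha> g p1)
         in is_density M gstar \<and> (\<forall>g. is_density M g \<longrightarrow> obj gstar \<le> obj g)"
proof -
  note [measurable] = L_meas L0_meas is_density_measurable[OF prior]
  have "(\<lambda>\<theta>. L \<theta> * \<pi>0 \<theta>) \<in> borel_measurable M" "(\<lambda>\<theta>. L \<theta> * L0 \<theta> * \<pi>0 \<theta>) \<in> borel_measurable M"
    by measurable
  then interpret gen_power_posterior_setting M \<xi> \<alpha> "\<lambda>\<theta>. L \<theta> * \<pi>0 \<theta>" "\<lambda>\<theta>. L \<theta> * L0 \<theta> * \<pi>0 \<theta>"
    using xi alpha Z_pos Z_fin by (simp add: gen_power_posterior_setting_def)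
  show ?thesis
    unfolding Let_def using is_density_gstar gstar_minimizes_alpha_div_mix by blast
qed

end
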